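(* Let $\mathcal X$ be finite, $\hat P_0,\hat P_1$ distributions on $\mathcal X$ with full support, and for $\hat\gamma$ with $-D(\hat P_0\|\hat P_1)\le\hat\gamma\le D(\hat P_1\|\hat P_0)$ let $\hat Q_\lambda(x)=\hat P_0^{1-\lambda}(x)\hat P_1^{\lambda}(x)/\sum_a\hat P_0^{1-\lambda}(a)\hat P_1^{\lambda}(a)$ with $\lambda\in[0,1]$ solving $D(\hat Q_\lambda\|\hat P_0)-D(\hat Q_\lambda\|\hat P_1)=\hat\gamma$. Define, for $i\in\{0,1\}$ and a constant $\alpha>0$, $$\theta_i(\hat P_0,\hat P_1,\hat\gamma)=\frac2\alpha\mathrm{Var}_{\hat P_i}\Big(\frac{\hat Q_\lambda(X)}{\hat P_i(X)}\Big).$$ Then for every such $\hat\gamma$, $$\frac{\partial}{\partial\hat\gamma}\theta_0(\hat P_0,\hat P_1,\hat\gamma)\ge0,\qquad \frac{\partial}{\partial\hat\gamma}\theta_1(\hat P_0,\hat P_1,\hat\gamma)\le0.$$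
   Context: $D$ denotes relative entropy. $\theta_i$ is the sensitivity of the worst-case error exponent of the mismatched likelihood ratio test (with test distributions $\hat P_0,\hat P_1$ and threshold $\hat\gamma$) to a divergence-ball mismatch of order/curvature $\alpha$. *)

theory Defs
  imports "HOL-Analysis.Analysis"
begin

definition full_support_dist :: "('a::finite \<Rightarrow> real) \<Rightarrow> bool" where
  "full_support_dist P \<longleftrightarrow> (\<forall>x. P x > 0) \<and> (\<Sum>x\<in>UNIV. P x) = 1"

definition KL :: "('a::finite \<Rightarrow> real) \<Rightarrow> ('a \<Rightarrow> real) \<Rightarrow> real" where
  "KL P Q = (\<Sum>x\<in>UNIV. P x * ln (P x / Q x))"

definition tilted :: "('a::finite \<Rightarrow> real) \<Rightarrow> ('a \<Rightarrow> real) \<Rightarrow> real \<Rightarrow> 'a \<Rightarrow> real" where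
  "tilted P0 P1 l x =
     P0 x powr (1 - l) * P1 x powr l / (\<Sum>a\<in>UNIV. P0 a powr (1 - l) * P1 a powr l)"

definition tilt_param :: "('a::finite \<Rightarrow> real) \<Rightarrow> ('a \<Rightarrow> real) \<Rightarrow> real \<Rightarrow> real" where
  "tilt_param P0 P1 g =
     (THE l. l \<in> {0..1} \<and> KL (tilted P0 P1 l) P0 - KL (tilted P0 P1 l) P1 = g)"

definition variance_under :: "('a::finite \<Rightarrow> real) \<Rightarrow> ('a \<Rightarrow> real) \<Rightarrow> real" where
  "variance_under P f = (\<Sum>x\<in>UNIV. P x * (f x - (\<Sum>y\<in>UNIV. P y * f y))\<^sup>2)"

definition theta :: "real \<Rightarrow> nat \<Rightarrow> ('a::finite \<Rightarrow> real) \<Rightarrow> ('a \<Rightarrow> real) \<Rightarrow> real \<Rightarrow> real" where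
  "theta alpha i P0 P1 g =
     (let Pi = (if i = 0 then P0 else P1)
      in 2 / alpha * variance_under Pi (\<lambda>x. tilted P0 P1 (tilt_param P0 P1 g) x / Pi x))"

end

(*
  Write L = ln (P1/P0) and M(t) = E_P0[exp (t L)]. The tilted distribution Q_lambda is the
  exponential tilt P0 exp (lambda L) / M(lambda), and D(Q_lambda||P0) - D(Q_lambda||P1) is the
  Q_lambda-mean F(lambda) = M'(lambda) / M(lambda) of L. The derivative of F is Var_Q_lambda(L), positive unless
  P0 = P1, so lambda(gamma) is the inverse of F and is differentiable with positive derivative.
  Since P_i = P0 exp (i L), the variance Var_P_i(Q_lambda/P_i) is the chi-square divergence
  M(2 lambda - i) / M(lambda)^2 - 1, whose lambda-derivative
  2 M(2 lambda - i) / M(lambda)^2 * (F(2 lambda - i) - F(lambda)) has, by monotonicity of F,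
  the sign of lambda - i: nonnegative for i = 0 and nonpositive for i = 1 on [0, 1].
*)
theory Submission
  imports Defs "HOL-Complex_Analysis.Conformal_Mappings"
begin

lemma variance_under_eq:
  assumes "(\<Sum>x\<in>UNIV. P x) = 1"
  shows "variance_under P f = (\<Sum>x\<in>UNIV. P x * (f x)\<^sup>2) - (\<Sum>x\<in>UNIV. P x * f x)\<^sup>2"
proof -
  define m where "m = (\<Sum>x\<in>UNIV. P x * f x)"
  have "P x * (f x - m)\<^sup>2 = P x * (f x)\<^sup>2 - 2 * m * (P x * f x) + m\<^sup>2 * P x" for x
    by (simp add: power2_diff algebra_simps)
  then have "variance_under P f = (\<Sum>x\<in>UNIV. P x * (f x)\<^sup>2) - 2 * m * m + m\<^sup>2"
    unfolding variance_under_def m_def[symmetric]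
    by (simp add: sum.distrib sum_subtractf sum_distrib_left[symmetric] assms m_def)
  then show ?thesis
    by (simp add: m_def power2_eq_square)
qed

lemma variance_under_pos:
  assumes "\<And>x. P x > 0" and "f x \<noteq> f y"
  shows "variance_under P f > 0"
proof -
  define m where "m = (\<Sum>z\<in>UNIV. P z * f z)"
  have nonneg: "P z * (f z - m)\<^sup>2 \<ge> 0" for z
    using assms(1)[of z] by simp
  have "variance_under P f \<noteq> 0"
  proof
    assume "variance_under P f = 0"
    then have zero: "P z * (f z - m)\<^sup>2 = 0" for z
      unfolding variance_under_def m_def[symmetric] using nonneg
      by (simp add: sum_nonneg_eq_0_iff)
    have "f z = m" for z
      using zero[of z] assms(1)[of z] by simp
    with assms(2) show False by simp
  qed
  moreover have "variance_under P f \<ge> 0"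
    unfolding variance_under_def m_def[symmetric] using nonneg by (simp add: sum_nonneg)
  ultimately show ?thesis by simp
qed

definition chi_square :: "('a::finite \<Rightarrow> real) \<Rightarrow> ('a \<Rightarrow> real) \<Rightarrow> real" where
  "chi_square Q P = (\<Sum>x\<in>UNIV. (Q x)\<^sup>2 / P x) - 1"

lemma variance_under_ratio_eq_chi_square:
  assumes "\<And>x. P x > 0" and "(\<Sum>x\<in>UNIV. P x) = 1" and "(\<Sum>x\<in>UNIV. Q x) = 1"
  shows "variance_under P (\<lambda>x. Q x / P x) = chi_square Q P"
proof -
  have "P x * (Q x / P x)\<^sup>2 = (Q x)\<^sup>2 / P x" "P x * (Q x / P x) = Q x" for x
    using assms(1)[of x] by (simp_all add: power2_eq_square)
  then show ?thesis
    by (simp add: variance_under_eq[OF assms(2)] assms(3) chi_square_def)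
qed

lemma sgn_diff_strict_mono:
  fixes f :: "real \<Rightarrow> real"
  assumes "strict_mono f"
  shows "sgn (f a - f b) = sgn (a - b)"
  using assms by (cases a b rule: linorder_cases) (auto simp: strict_mono_less)

definition mgf :: "('a::finite \<Rightarrow> real) \<Rightarrow> ('a \<Rightarrow> real) \<Rightarrow> real \<Rightarrow> real" where
  "mgf w L t = (\<Sum>x\<in>UNIV. w x * exp (t * L x))"

definition exp_tilt :: "('a::finite \<Rightarrow> real) \<Rightarrow> ('a \<Rightarrow> real) \<Rightarrow> real \<Rightarrow> 'a \<Rightarrow> real" where
  "exp_tilt w L t x = w x * exp (t * L x) / mgf w L t"

definition tilted_mean :: "('a::finite \<Rightarrow> real) \<Rightarrow> ('a \<Rightarrow> real) \<Rightarrow> real \<Rightarrow> real" where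
  "tilted_mean w L t = (\<Sum>x\<in>UNIV. exp_tilt w L t x * L x)"

lemma mgf_pos:
  assumes "\<And>x. w x > 0"
  shows "mgf w L t > 0"
  unfolding mgf_def using assms by (intro sum_pos) auto

lemma has_real_derivative_mgf:
  "(mgf w L has_real_derivative mgf (\<lambda>x. w x * L x) L t) (at t)"
  unfolding mgf_def by (rule DERIV_sum) (auto intro!: derivative_eq_intros)

lemma sum_exp_tilt_mult:
  "(\<Sum>x\<in>UNIV. exp_tilt w L t x * f x) = mgf (\<lambda>x. w x * f x) L t / mgf w L t"
  unfolding exp_tilt_def mgf_def by (simp add: sum_divide_distrib ac_simps)

lemma sum_exp_tilt:
  assumes "\<And>x. w x > 0"
  shows "(\<Sum>x\<in>UNIV. exp_tilt w L t x) = 1"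
  using sum_exp_tilt_mult[of w L t "\<lambda>_. 1"] mgf_pos[of w L t, OF assms] by simp

lemma exp_tilt_pos:
  assumes "\<And>x. w x > 0"
  shows "exp_tilt w L t x > 0"
  unfolding exp_tilt_def using assms mgf_pos[of w L t, OF assms] by simp

lemma tilted_mean_eq_mgf_ratio:
  "tilted_mean w L t = mgf (\<lambda>x. w x * L x) L t / mgf w L t"
  using sum_exp_tilt_mult[of w L t L] by (simp add: tilted_mean_def)

lemma has_real_derivative_tilted_mean:
  assumes "\<And>x. w x > 0"
  shows "(tilted_mean w L has_real_derivative variance_under (exp_tilt w L t) L) (at t)"
proof -
  define M1 where "M1 = mgf (\<lambda>x. w x * L x) L"
  define M2 where "M2 = mgf (\<lambda>x. w x * (L x)\<^sup>2) L"
  have M0_pos: "mgf w L t > 0"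
    using mgf_pos[of w L t, OF assms] .
  have mean: "tilted_mean w L = (\<lambda>t. M1 t / mgf w L t)"
    by (simp add: fun_eq_iff tilted_mean_eq_mgf_ratio M1_def)
  have "(M1 has_real_derivative M2 t) (at t)"
    using has_real_derivative_mgf[of "\<lambda>x. w x * L x" L t]
    by (simp add: M1_def M2_def power2_eq_square mult.assoc)
  then have "((\<lambda>t. M1 t / mgf w L t) has_real_derivative
      (M2 t * mgf w L t - M1 t * M1 t) / (mgf w L t * mgf w L t)) (at t)"
    using M0_pos has_real_derivative_mgf[of w L t]
    by (intro DERIV_divide) (auto simp: M1_def)
  moreover have "variance_under (exp_tilt w L t) L = M2 t / mgf w L t - (M1 t / mgf w L t)\<^sup>2"
    using sum_exp_tilt_mult[of w L t "\<lambda>x. (L x)\<^sup>2"] sum_exp_tilt_mult[of w L t L]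
    by (simp add: variance_under_eq sum_exp_tilt[OF assms] M1_def M2_def)
  moreover have "(M2 t * mgf w L t - M1 t * M1 t) / (mgf w L t * mgf w L t)
      = M2 t / mgf w L t - (M1 t / mgf w L t)\<^sup>2"
    using M0_pos by (simp add: diff_divide_distrib power2_eq_square)
  ultimately show ?thesis
    unfolding mean by simp
qed

lemma continuous_on_tilted_mean:
  assumes "\<And>x. w x > 0"
  shows "continuous_on S (tilted_mean w L)"
  using has_real_derivative_tilted_mean[of w L, OF assms]
  by (intro continuous_at_imp_continuous_on) (blast intro: DERIV_isCont)

lemma strict_mono_tilted_mean:
  assumes "\<And>x. w x > 0" and "L x \<noteq> L y"
  shows "strict_mono (tilted_mean w L)"
proof (rule strict_monoI)
  fix a b :: real
  assume "a < b"
  then show "tilted_mean w L a < tilted_mean w L b"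
  proof (rule DERIV_pos_imp_increasing)
    fix t
    show "\<exists>D. (tilted_mean w L has_real_derivative D) (at t) \<and> D > 0"
      using has_real_derivative_tilted_mean[of w L t, OF assms(1)]
        variance_under_pos[of "exp_tilt w L t", OF exp_tilt_pos[of w, OF assms(1)] assms(2)]
      by blast
  qed
qed

lemma chi_square_exp_tilt:
  assumes "\<And>x. w x > 0"
  shows "chi_square (exp_tilt w L l) (\<lambda>x. w x * exp (c * L x))
    = mgf w L (2 * l - c) / (mgf w L l)\<^sup>2 - 1"
proof -
  have "exp ((2 * l - c) * L x) = exp (l * L x) * exp (l * L x) / exp (c * L x)" for x
    by (simp add: mult_exp_exp exp_diff[symmetric] algebra_simps)
  then have "(exp_tilt w L l x)\<^sup>2 / (w x * exp (c * L x))
      = w x * exp ((2 * l - c) * L x) / (mgf w L l)\<^sup>2" for x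
    using assms[of x] by (simp add: exp_tilt_def power2_eq_square mult_ac)
  then show ?thesis
    by (simp add: chi_square_def mgf_def sum_divide_distrib)
qed

lemma has_real_derivative_chi_square_exp_tilt:
  assumes "\<And>x. w x > 0"
  shows "((\<lambda>l. chi_square (exp_tilt w L l) (\<lambda>x. w x * exp (c * L x))) has_real_derivative
    2 * (mgf w L (2 * l - c) / (mgf w L l)\<^sup>2) * (tilted_mean w L (2 * l - c) - tilted_mean w L l)) (at l)"
proof -
  define M where "M = mgf w L"
  define M1 where "M1 = mgf (\<lambda>x. w x * L x) L"
  have M': "(M has_real_derivative M1 t) (at t)" for t
    unfolding M_def M1_def by (rule has_real_derivative_mgf)
  have pos: "M t > 0" for t
    unfolding M_def by (rule mgf_pos[of w L t, OF assms])
  have "((\<lambda>l. M (2 * l - c)) has_real_derivative M1 (2 * l - c) * 2) (at l)"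
    by (rule DERIV_chain2[OF M']) (auto intro!: derivative_eq_intros)
  moreover have "((\<lambda>l. M l * M l) has_real_derivative M1 l * M l + M1 l * M l) (at l)"
    by (rule DERIV_mult[OF M' M'])
  ultimately have "((\<lambda>l. M (2 * l - c) / (M l * M l) - 1) has_real_derivative
      (M1 (2 * l - c) * 2 * (M l * M l) - M (2 * l - c) * (M1 l * M l + M1 l * M l))
        / ((M l * M l) * (M l * M l)) - 0) (at l)"
    using pos[of l] by (intro DERIV_diff DERIV_divide DERIV_const) auto
  moreover have "(M1 (2 * l - c) * 2 * (M l * M l) - M (2 * l - c) * (M1 l * M l + M1 l * M l))
        / ((M l * M l) * (M l * M l)) - 0
      = 2 * (M (2 * l - c) / (M l)\<^sup>2) * (M1 (2 * l - c) / M (2 * l - c) - M1 l / M l)"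
    using pos[of l] pos[of "2 * l - c"] by (simp add: field_simps power2_eq_square)
  ultimately show ?thesis
    using chi_square_exp_tilt[of w, OF assms]
    by (simp add: M_def M1_def tilted_mean_eq_mgf_ratio power2_eq_square)
qed

lemma KL_self: "KL P P = 0"
  unfolding KL_def by (rule sum.neutral) auto

definition llr :: "('a::finite \<Rightarrow> real) \<Rightarrow> ('a \<Rightarrow> real) \<Rightarrow> 'a \<Rightarrow> real" where
  "llr P0 P1 x = ln (P1 x / P0 x)"

lemma full_support_dist_pos: "full_support_dist P \<Longrightarrow> P x > 0"
  by (simp add: full_support_dist_def)

lemma full_support_dist_sum: "full_support_dist P \<Longrightarrow> (\<Sum>x\<in>UNIV. P x) = 1"
  by (simp add: full_support_dist_def)

lemma exp_llr:
  assumes "P0 x > 0" and "P1 x > 0"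
  shows "P0 x * exp (llr P0 P1 x) = P1 x"
  using assms by (simp add: llr_def)

lemma powr_mix_eq_exp_llr:
  assumes "P0 x > 0" and "P1 x > 0"
  shows "P0 x powr (1 - t) * P1 x powr t = P0 x * exp (t * llr P0 P1 x)"
proof -
  have "P0 x powr (1 - t) * P1 x powr t = exp ((1 - t) * ln (P0 x) + t * ln (P1 x))"
    using assms by (simp add: powr_def exp_add)
  also have "\<dots> = exp (ln (P0 x) + t * llr P0 P1 x)"
    using assms by (simp add: llr_def ln_div algebra_simps)
  finally show ?thesis
    using assms by (simp add: exp_add)
qed

lemma tilted_eq_exp_tilt:
  assumes "\<And>x. P0 x > 0" and "\<And>x. P1 x > 0"
  shows "tilted P0 P1 l = exp_tilt P0 (llr P0 P1) l"
  using assms by (simp add: fun_eq_iff tilted_def exp_tilt_def mgf_def powr_mix_eq_exp_llr)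

lemma KL_diff_eq_sum_llr:
  assumes "\<And>x. Q x > 0" and "\<And>x. P0 x > 0" and "\<And>x. P1 x > 0"
  shows "KL Q P0 - KL Q P1 = (\<Sum>x\<in>UNIV. Q x * llr P0 P1 x)"
proof -
  have "Q x * ln (Q x / P0 x) - Q x * ln (Q x / P1 x) = Q x * llr P0 P1 x" for x
    using assms[of x] by (simp add: llr_def ln_div algebra_simps)
  then show ?thesis
    by (simp add: KL_def sum_subtractf[symmetric])
qed

lemma exp_tilt_llr_0:
  assumes "full_support_dist P0"
  shows "exp_tilt P0 (llr P0 P1) 0 = P0"
  using full_support_dist_sum[OF assms] by (simp add: fun_eq_iff exp_tilt_def mgf_def)

lemma exp_tilt_llr_1:
  assumes "full_support_dist P0" and "full_support_dist P1"
  shows "exp_tilt P0 (llr P0 P1) 1 = P1"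
proof -
  have "P0 x * exp (llr P0 P1 x) = P1 x" for x
    using assms by (intro exp_llr full_support_dist_pos)
  then show ?thesis
    using full_support_dist_sum[OF assms(2)] by (simp add: fun_eq_iff exp_tilt_def mgf_def)
qed

lemma tilted_mean_llr_eq_KL_diff:
  assumes "full_support_dist P0" and "full_support_dist P1"
  shows "tilted_mean P0 (llr P0 P1) l = KL (tilted P0 P1 l) P0 - KL (tilted P0 P1 l) P1"
proof -
  have pos: "P0 x > 0" "P1 x > 0" for x
    using assms by (simp_all add: full_support_dist_pos)
  then show ?thesis
    using KL_diff_eq_sum_llr[of "exp_tilt P0 (llr P0 P1) l" P0 P1] exp_tilt_pos[of P0, OF pos(1)]
    by (simp add: tilted_eq_exp_tilt tilted_mean_def)
qed

lemma tilted_mean_llr_0: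
  assumes "full_support_dist P0" and "full_support_dist P1"
  shows "tilted_mean P0 (llr P0 P1) 0 = - KL P0 P1"
  using tilted_mean_llr_eq_KL_diff[OF assms, of 0] assms
  by (simp add: tilted_eq_exp_tilt full_support_dist_pos exp_tilt_llr_0 KL_self)

lemma tilted_mean_llr_1:
  assumes "full_support_dist P0" and "full_support_dist P1"
  shows "tilted_mean P0 (llr P0 P1) 1 = KL P1 P0"
  using tilted_mean_llr_eq_KL_diff[OF assms, of 1] assms
  by (simp add: tilted_eq_exp_tilt full_support_dist_pos exp_tilt_llr_1 KL_self)

lemma llr_nonconstant:
  assumes "full_support_dist P0" and "full_support_dist P1" and "P0 \<noteq> P1"
  obtains x y where "llr P0 P1 x \<noteq> llr P0 P1 y"
proof (rule ccontr)
  assume "\<not> thesis"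
  with that have const: "llr P0 P1 x = llr P0 P1 y" for x y by blast
  obtain z where "P0 z \<noteq> P1 z"
    using assms(3) by blast
  have P1_eq: "P1 x = P0 x * exp (llr P0 P1 z)" for x
    using exp_llr[of P0 x P1] const[of x z] assms(1,2) by (simp add: full_support_dist_pos)
  have "exp (llr P0 P1 z) = 1"
    using full_support_dist_sum[OF assms(2)] full_support_dist_sum[OF assms(1)]
    by (simp add: P1_eq sum_distrib_right[symmetric])
  with P1_eq[of z] \<open>P0 z \<noteq> P1 z\<close> show False by simp
qed

lemma strict_mono_tilted_mean_llr:
  assumes "full_support_dist P0" and "full_support_dist P1" and "P0 \<noteq> P1"
  shows "strict_mono (tilted_mean P0 (llr P0 P1))"
  using llr_nonconstant[OF assms] strict_mono_tilted_mean[of P0] assms(1)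
  by (metis full_support_dist_pos)

lemma variance_under_llr_pos:
  assumes "full_support_dist P0" and "full_support_dist P1" and "P0 \<noteq> P1"
  shows "variance_under (exp_tilt P0 (llr P0 P1) l) (llr P0 P1) > 0"
proof -
  obtain x y where "llr P0 P1 x \<noteq> llr P0 P1 y"
    using llr_nonconstant[OF assms] .
  moreover have "exp_tilt P0 (llr P0 P1) l z > 0" for z
    using assms(1) by (intro exp_tilt_pos full_support_dist_pos)
  ultimately show ?thesis
    by (intro variance_under_pos)
qed

lemma tilt_param_solves:
  assumes "full_support_dist P0" and "full_support_dist P1" and "P0 \<noteq> P1"
    and "g \<in> {- KL P0 P1 .. KL P1 P0}"
  shows "tilt_param P0 P1 g \<in> {0..1}" and "tilted_mean P0 (llr P0 P1) (tilt_param P0 P1 g) = g"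
proof -
  let ?F = "tilted_mean P0 (llr P0 P1)"
  obtain l where l: "l \<in> {0..1}" "?F l = g"
    using IVT'[of ?F 0 g 1] assms(4) continuous_on_tilted_mean[of P0]
    by (auto simp: tilted_mean_llr_0[OF assms(1,2)] tilted_mean_llr_1[OF assms(1,2)]
        full_support_dist_pos[OF assms(1)])
  have "tilt_param P0 P1 g = l"
    unfolding tilt_param_def tilted_mean_llr_eq_KL_diff[OF assms(1,2), symmetric]
    using l strict_mono_eq[OF strict_mono_tilted_mean_llr[OF assms(1-3)]] by (intro the_equality) auto
  with l show "tilt_param P0 P1 g \<in> {0..1}" and "?F (tilt_param P0 P1 g) = g"
    by simp_all
qed

lemma has_real_derivative_tilt_param:
  assumes "full_support_dist P0" and "full_support_dist P1" and "P0 \<noteq> P1"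
    and "g \<in> {- KL P0 P1 .. KL P1 P0}"
  shows "(tilt_param P0 P1 has_real_derivative
      inverse (variance_under (exp_tilt P0 (llr P0 P1) (tilt_param P0 P1 g)) (llr P0 P1)))
    (at g within {- KL P0 P1 .. KL P1 P0})"
proof -
  let ?F = "tilted_mean P0 (llr P0 P1)"
  let ?l = "tilt_param P0 P1 g"
  have pos: "P0 x > 0" for x
    using assms(1) by (rule full_support_dist_pos)
  have inv_F: "inv ?F (?F l) = l" for l
    using strict_mono_tilted_mean_llr[OF assms(1-3)] by (simp add: strict_mono_imp_inj_on)
  have "(inv ?F has_real_derivative
      inverse (variance_under (exp_tilt P0 (llr P0 P1) ?l) (llr P0 P1))) (at (?F ?l))"
    using has_real_derivative_tilted_mean[of P0 "llr P0 P1" ?l, OF pos]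
      continuous_on_tilted_mean[of P0 UNIV "llr P0 P1", OF pos]
      variance_under_llr_pos[OF assms(1-3), of ?l]
    by (intro has_field_derivative_inverse_strong[where S = UNIV]) (auto simp: inv_F)
  then have "(inv ?F has_real_derivative
      inverse (variance_under (exp_tilt P0 (llr P0 P1) ?l) (llr P0 P1))) (at g within {- KL P0 P1 .. KL P1 P0})"
    by (simp add: tilt_param_solves(2)[OF assms] has_field_derivative_at_within)
  then show ?thesis
    by (rule has_field_derivative_transform_within[OF _ zero_less_one assms(4)])
      (metis inv_F tilt_param_solves(2)[OF assms(1-3)])
qed

lemma theta_eq_chi_square:
  assumes "full_support_dist P0" and "full_support_dist P1" and "i \<le> 1"
  shows "theta alpha i P0 P1 g = 2 / alpha *
    chi_square (exp_tilt P0 (llr P0 P1) (tilt_param P0 P1 g)) (\<lambda>x. P0 x * exp (real i * llr P0 P1 x))"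
proof -
  let ?l = "tilt_param P0 P1 g"
  define Pi where "Pi = (if i = 0 then P0 else P1)"
  have "i = 0 \<or> i = 1"
    using assms(3) by auto
  then have Pi_eq: "Pi = (\<lambda>x. P0 x * exp (real i * llr P0 P1 x))"
    using assms(1,2) exp_llr[of P0 _ P1] by (auto simp: Pi_def fun_eq_iff full_support_dist_pos)
  have "full_support_dist Pi"
    using assms(1,2) by (simp add: Pi_def)
  moreover have "(\<Sum>x\<in>UNIV. exp_tilt P0 (llr P0 P1) ?l x) = 1"
    using assms(1) by (intro sum_exp_tilt) (simp add: full_support_dist_pos)
  ultimately have "variance_under Pi (\<lambda>x. exp_tilt P0 (llr P0 P1) ?l x / Pi x)
      = chi_square (exp_tilt P0 (llr P0 P1) ?l) Pi"
    by (intro variance_under_ratio_eq_chi_square) (simp_all add: full_support_dist_pos full_support_dist_sum)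
  then show ?thesis
    using assms(1,2)
    by (simp add: theta_def Pi_def[symmetric] Pi_eq[symmetric] tilted_eq_exp_tilt full_support_dist_pos)
qed

lemma has_real_derivative_theta:
  assumes "full_support_dist P0" and "full_support_dist P1" and "P0 \<noteq> P1"
    and "alpha > 0" and "i \<le> 1" and "g \<in> {- KL P0 P1 .. KL P1 P0}"
  obtains D where "((\<lambda>g. theta alpha i P0 P1 g) has_real_derivative D) (at g within {- KL P0 P1 .. KL P1 P0})"
    and "sgn D = sgn (tilt_param P0 P1 g - real i)"
proof -
  let ?L = "llr P0 P1"
  let ?F = "tilted_mean P0 ?L"
  let ?l = "tilt_param P0 P1 g"
  define V where "V = variance_under (exp_tilt P0 ?L ?l) ?L"
  define R where "R = mgf P0 ?L (2 * ?l - real i) / (mgf P0 ?L ?l)\<^sup>2"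
  have pos: "P0 x > 0" for x
    using assms(1) by (rule full_support_dist_pos)
  have "V > 0"
    unfolding V_def by (rule variance_under_llr_pos[OF assms(1-3)])
  have "R > 0"
    unfolding R_def by (intro divide_pos_pos zero_less_power mgf_pos pos)
  have "((\<lambda>l. 2 / alpha * chi_square (exp_tilt P0 ?L l) (\<lambda>x. P0 x * exp (real i * ?L x)))
      has_real_derivative 2 / alpha * (2 * R * (?F (2 * ?l - real i) - ?F ?l))) (at ?l)"
    unfolding R_def by (intro DERIV_cmult has_real_derivative_chi_square_exp_tilt pos)
  from DERIV_chain2[OF this has_real_derivative_tilt_param[OF assms(1-3,6)]]
  have "((\<lambda>g. theta alpha i P0 P1 g) has_real_derivative
      2 / alpha * (2 * R * (?F (2 * ?l - real i) - ?F ?l)) * inverse V)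
      (at g within {- KL P0 P1 .. KL P1 P0})"
    by (simp add: theta_eq_chi_square[OF assms(1,2,5)] V_def)
  moreover have "sgn (2 / alpha * (2 * R * (?F (2 * ?l - real i) - ?F ?l)) * inverse V)
      = sgn (?l - real i)"
    using \<open>V > 0\<close> \<open>R > 0\<close> assms(4)
      sgn_diff_strict_mono[OF strict_mono_tilted_mean_llr[OF assms(1-3)], of "2 * ?l - real i" ?l]
    by (simp add: sgn_mult)
  ultimately show ?thesis
    using that by blast
qed

theorem proposition1:
  fixes P0 P1 :: "'a::finite \<Rightarrow> real" and alpha gamma :: real
  assumes "full_support_dist P0" and "full_support_dist P1" and "alpha > 0"
    and "- KL P0 P1 \<le> gamma" and "gamma \<le> KL P1 P0"
  shows "(\<exists>D. ((\<lambda>g. theta alpha 0 P0 P1 g) has_real_derivative D)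
                 (at gamma within {- KL P0 P1 .. KL P1 P0}) \<and> D \<ge> 0)
       \<and> (\<exists>D. ((\<lambda>g. theta alpha 1 P0 P1 g) has_real_derivative D)
                 (at gamma within {- KL P0 P1 .. KL P1 P0}) \<and> D \<le> 0)"
proof (cases "P0 = P1")
  case True
  then have "{- KL P0 P1 .. KL P1 P0} = {gamma}"
    using assms(4,5) by (simp add: KL_self)
  moreover have "(f has_real_derivative 0) (at gamma within {gamma})" for f
    by (simp add: has_field_derivative_def has_derivative_within_singleton_iff bounded_linear_mult_right)
  ultimately show ?thesis
    by auto
next
  case False
  have gamma: "gamma \<in> {- KL P0 P1 .. KL P1 P0}"
    using assms(4,5) by simp
  obtain D0 where "((\<lambda>g. theta alpha 0 P0 P1 g) has_real_derivative D0) (at gamma within {- KL P0 P1 .. KL P1 P0})"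
      and "sgn D0 = sgn (tilt_param P0 P1 gamma)"
    using has_real_derivative_theta[OF assms(1,2) False assms(3) _ gamma, of 0] by auto
  moreover obtain D1 where "((\<lambda>g. theta alpha 1 P0 P1 g) has_real_derivative D1) (at gamma within {- KL P0 P1 .. KL P1 P0})"
      and "sgn D1 = sgn (tilt_param P0 P1 gamma - 1)"
    using has_real_derivative_theta[OF assms(1,2) False assms(3) _ gamma, of 1] by auto
  moreover have "tilt_param P0 P1 gamma \<in> {0..1}"
    using tilt_param_solves(1)[OF assms(1,2) False gamma] .
  ultimately show ?thesis
    by (auto simp: sgn_if split: if_splits)
qed

end
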